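(* Let $s>0$ and let $\Omega\subset\mathbb R^N$ be open and bounded. There exists a constant $C>0$ depending only on $s$ and $\operatorname{diam}(\Omega)$ (and not on the probability measure $\sigma_s$) such that for all $u\in\mathcal X^s(\Omega)$, $$\|u\|_{L^2(\mathbb R^N)}^2\le C\,\mathcal E_{2s_1,s}(u,u).$$ Consequently $\mathcal E_{2s_1,s}$ is a scalar product on $\mathcal X^s(\Omega)$ inducing a norm equivalent to $(\|u\|^2_{L^2}+\mathcal E_{2s_1,s}(u,u))^{1/2}$.
   Context: $s_1=\min\{n\in\mathbb Z:n>s\}$. $\sigma_s$ is a Borel probability measure on $\mathbb S^{N-1}$; $\nu_s(U)=\int_0^\infty\int_{\mathbb S^{N-1}}\chi_U(r\theta)r^{-1-2s}\sigma_s(d\theta)\,dr$; $M_{s,\sigma_s}(e)=\int|e\cdot\theta|^{2s}\sigma_s(d\theta)$; $e_s$ a maximum point of $M_{s,\sigma_s}$; for integer $k>s$, $\frac2{c_{k,s}}=2^k\int(1-\cos(e_s\cdot y))^k\nu_s(dy)$; $\delta_mu(x,y)=\sum_{j=-m}^m(-1)^j\binom{2m}{m-j}u(x+jy)$; $\mathcal E_{2s_1,s}(u,v)=\frac{c_{2s_1,s}}2\iint_{\mathbb R^{2N}}\delta_{s_1}u(x,y)\delta_{s_1}v(x,y)\,dx\,\nu_s(dy)$. $\mathcal X^s(\Omega)$ is the closure of $C^\infty_c(\Omega)$ with respect to the norm $(\|u\|^2_{L^2(\mathbb R^N)}+\mathcal E_{2s_1,s}(u,u))^{1/2}$. *)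

theory Defs
  imports "HOL-Analysis.Analysis" "HOL-Probability.Probability"
begin

coinductive smooth_fun :: "('a::euclidean_space \<Rightarrow> real) \<Rightarrow> bool" where
  "(\<forall>x. f differentiable (at x)) \<Longrightarrow>
   (\<forall>b\<in>Basis. smooth_fun (\<lambda>x. frechet_derivative f (at x) b)) \<Longrightarrow> smooth_fun f"

definition test_fun :: "'a::euclidean_space set \<Rightarrow> ('a \<Rightarrow> real) \<Rightarrow> bool" where
  "test_fun \<Omega> \<phi> \<longleftrightarrow> smooth_fun \<phi> \<and> compact (closure {x. \<phi> x \<noteq> 0})
      \<and> closure {x. \<phi> x \<noteq> 0} \<subseteq> \<Omega>"

text \<open>s_1 = min {n integer, n > s} (for s > 0).\<close>
definition s1 :: "real \<Rightarrow> nat" where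
  "s1 s = nat (\<lfloor>s\<rfloor> + 1)"

definition sphere_prob :: "'a::euclidean_space measure \<Rightarrow> bool" where
  "sphere_prob \<sigma> \<longleftrightarrow> prob_space \<sigma> \<and> sets \<sigma> = sets (restrict_space borel (sphere 0 1))"

definition nu_s :: "real \<Rightarrow> 'a::euclidean_space measure \<Rightarrow> 'a measure" where
  "nu_s s \<sigma> = distr
     (pair_measure (density lborel (\<lambda>r. ennreal (indicator {0<..} r * r powr (- 1 - 2 * s)))) \<sigma>)
     borel (\<lambda>(r, \<theta>). r *\<^sub>R \<theta>)"

definition M_s :: "real \<Rightarrow> 'a::euclidean_space measure \<Rightarrow> 'a \<Rightarrow> real" where
  "M_s s \<sigma> e = (\<integral>\<theta>. \<bar>e \<bullet> \<theta>\<bar> powr (2 * s) \<partial>\<sigma>)"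

definition e_s :: "real \<Rightarrow> 'a::euclidean_space measure \<Rightarrow> 'a" where
  "e_s s \<sigma> = (SOME e. e \<in> sphere 0 1 \<and> (\<forall>e'\<in>sphere 0 1. M_s s \<sigma> e' \<le> M_s s \<sigma> e))"

definition c_ks :: "nat \<Rightarrow> real \<Rightarrow> 'a::euclidean_space measure \<Rightarrow> real" where
  "c_ks k s \<sigma> = 2 / (2 ^ k * enn2real (\<integral>\<^sup>+ y. ennreal ((1 - cos (e_s s \<sigma> \<bullet> y)) ^ k) \<partial>nu_s s \<sigma>))"

definition delta_m :: "nat \<Rightarrow> ('a::euclidean_space \<Rightarrow> real) \<Rightarrow> 'a \<Rightarrow> 'a \<Rightarrow> real" where
  "delta_m m u x y = (\<Sum>j\<in>{-int m..int m}.
      (-1) ^ nat \<bar>j\<bar> * real ((2 * m) choose nat (int m - j)) * u (x + real_of_int j *\<^sub>R y))"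

definition E_form :: "real \<Rightarrow> 'a::euclidean_space measure \<Rightarrow> ('a \<Rightarrow> real) \<Rightarrow> ('a \<Rightarrow> real) \<Rightarrow> real" where
  "E_form s \<sigma> u v = c_ks (2 * s1 s) s \<sigma> / 2 *
     (\<integral>z. delta_m (s1 s) u (fst z) (snd z) * delta_m (s1 s) v (fst z) (snd z) \<partial>(pair_measure lborel (nu_s s \<sigma>)))"

text \<open>The quadratic energy E_{2s_1,s}(u,u) as an extended nonnegative value
  (used to define the norm of X^s, where finiteness is not assumed a priori).\<close>
definition E_energy :: "real \<Rightarrow> 'a::euclidean_space measure \<Rightarrow> ('a \<Rightarrow> real) \<Rightarrow> ennreal" where
  "E_energy s \<sigma> u = ennreal (c_ks (2 * s1 s) s \<sigma> / 2) *
     (\<integral>\<^sup>+z. ennreal ((delta_m (s1 s) u (fst z) (snd z))\<^sup>2) \<partial>(pair_measure lborel (nu_s s \<sigma>)))"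

definition X_normsq :: "real \<Rightarrow> 'a::euclidean_space measure \<Rightarrow> ('a \<Rightarrow> real) \<Rightarrow> ennreal" where
  "X_normsq s \<sigma> u = (\<integral>\<^sup>+x. ennreal ((u x)\<^sup>2) \<partial>lborel) + E_energy s \<sigma> u"

text \<open>X^s(Omega): closure of C_c^infinity(Omega) in the above norm, i.e. the
  measurable functions of finite norm that are norm-limits of test functions.\<close>
definition X_s :: "real \<Rightarrow> 'a::euclidean_space measure \<Rightarrow> 'a set \<Rightarrow> ('a \<Rightarrow> real) set" where
  "X_s s \<sigma> \<Omega> = {u. u \<in> borel_measurable lborel \<and> X_normsq s \<sigma> u < \<infinity> \<and>
      (\<exists>\<phi>::nat \<Rightarrow> 'a \<Rightarrow> real. (\<forall>n. test_fun \<Omega> (\<phi> n)) \<and>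
         (\<lambda>n. X_normsq s \<sigma> (\<lambda>x. u x - \<phi> n x)) \<longlonglongrightarrow> 0)}"

end

theory Submission
  imports Defs
begin

text \<open>Fix a > diam \<Omega>. For |y| \<ge> a at most one of the points x + j y (|j| \<le> s_1) lies in \<Omega>,
  so for u vanishing outside \<Omega> the difference \<delta>_{s_1}u(x,y) reduces to binom(2 s_1, s_1) u(x).
  Integrating over {|y| \<ge> a}, whose \<nu>_s-measure a^(-2s)/(2s) does not depend on \<sigma>_s, bounds
  E(u,u) below by a multiple of the squared L^2 norm of u. The constant c_{2s_1,s} is bounded below
  uniformly in \<sigma>_s because (1 - cos(e\<cdot>y))^k \<le> min(|y|^(2k), 2^k) has a \<nu>_s-integral bounded
  independently of \<sigma>_s, and that integral is nonzero since the maximiser e_s of M_s cannot be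
  orthogonal to \<sigma>_s-almost every direction.\<close>

section \<open>The measure \<nu>_s in polar coordinates\<close>

definition radial_density :: "real \<Rightarrow> real \<Rightarrow> real" where
  "radial_density s r = indicator {0<..} r * r powr (- 1 - 2 * s)"

lemma radial_density_nonneg: "0 \<le> radial_density s r"
  by (simp add: radial_density_def indicator_def)

lemma borel_measurable_radial_density [measurable]: "radial_density s \<in> borel_measurable borel"
  unfolding radial_density_def by measurable

lemma space_sphere_prob: "sphere_prob \<sigma> \<Longrightarrow> space \<sigma> = sphere (0::'a::euclidean_space) 1"
proof -
  assume "sphere_prob \<sigma>"
  then have "space \<sigma> = space (restrict_space borel (sphere (0::'a) 1))"
    unfolding sphere_prob_def by (intro sets_eq_imp_space_eq) simp
  then show ?thesis by (simp add: space_restrict_space)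
qed

lemma borel_measurable_sphere_prob:
  assumes "sphere_prob (\<sigma>::'a::euclidean_space measure)" and "g \<in> borel_measurable borel"
  shows "g \<in> borel_measurable \<sigma>"
  using measurable_restrict_space1[OF assms(2)] assms(1)
  unfolding sphere_prob_def by (metis measurable_cong_sets)

lemma sets_nu_s: "sets (nu_s s \<sigma>) = sets borel"
  by (simp add: nu_s_def)

lemma nn_integral_nu_s:
  assumes sp: "sphere_prob (\<sigma>::'a::euclidean_space measure)" and f: "f \<in> borel_measurable borel"
  shows "(\<integral>\<^sup>+y. f y \<partial>nu_s s \<sigma>)
       = (\<integral>\<^sup>+r. ennreal (radial_density s r) * (\<integral>\<^sup>+\<theta>. f (r *\<^sub>R \<theta>) \<partial>\<sigma>) \<partial>lborel)"
proof -
  interpret prob_space \<sigma> using sp by (simp add: sphere_prob_def)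
  note [measurable] = borel_measurable_sphere_prob[OF sp measurable_ident_sets[OF refl]]
  let ?R = "density lborel (\<lambda>r. ennreal (radial_density s r))"
  have "(\<integral>\<^sup>+y. f y \<partial>nu_s s \<sigma>) = (\<integral>\<^sup>+z. f (fst z *\<^sub>R snd z) \<partial>(?R \<Otimes>\<^sub>M \<sigma>))"
    unfolding nu_s_def radial_density_def[symmetric]
    by (subst nn_integral_distr) (auto simp: case_prod_beta' f)
  also have "\<dots> = (\<integral>\<^sup>+r. \<integral>\<^sup>+\<theta>. f (r *\<^sub>R \<theta>) \<partial>\<sigma> \<partial>?R)"
    by (subst nn_integral_fst[symmetric]) (use f in measurable)
  also have "\<dots> = (\<integral>\<^sup>+r. ennreal (radial_density s r) * (\<integral>\<^sup>+\<theta>. f (r *\<^sub>R \<theta>) \<partial>\<sigma>) \<partial>lborel)"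
    by (rule nn_integral_density) (use f in measurable)
  finally show ?thesis .
qed

lemma nn_integral_nu_s_radial:
  assumes sp: "sphere_prob (\<sigma>::'a::euclidean_space measure)" and g: "g \<in> borel_measurable borel"
  shows "(\<integral>\<^sup>+y. g (norm y) \<partial>nu_s s \<sigma>) = (\<integral>\<^sup>+r. ennreal (radial_density s r) * g r \<partial>lborel)"
proof -
  interpret prob_space \<sigma> using sp by (simp add: sphere_prob_def)
  have "ennreal (radial_density s r) * (\<integral>\<^sup>+\<theta>. g (norm (r *\<^sub>R \<theta>)) \<partial>\<sigma>)
      = ennreal (radial_density s r) * g r" for r
  proof (cases "r > 0")
    case True
    then have "(\<integral>\<^sup>+\<theta>. g (norm (r *\<^sub>R \<theta>)) \<partial>\<sigma>) = (\<integral>\<^sup>+\<theta>. g r \<partial>\<sigma>)"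
      by (intro nn_integral_cong) (simp add: space_sphere_prob[OF sp])
    then show ?thesis by (simp add: emeasure_space_1)
  qed (simp add: radial_density_def)
  then show ?thesis
    by (subst nn_integral_nu_s[OF sp]) (use g in auto)
qed

lemma has_integral_radial_density_tail:
  assumes "s > 0" and "a > 0"
  shows "((\<lambda>r. radial_density s r * indicator {a..} r) has_integral a powr (- 2 * s) / (2 * s)) UNIV"
proof -
  have eq: "radial_density s r * indicator {a..} r = (if r \<in> {a..} then r powr (- 1 - 2 * s) else 0)" for r
    using assms by (simp add: radial_density_def indicator_def)
  have "((\<lambda>r. r powr (- 1 - 2 * s)) has_integral a powr (- 2 * s) / (2 * s)) {a..}"
    using has_integral_powr_to_inf[of "- 1 - 2 * s" a] assms by simp
  then show ?thesis
    unfolding eq has_integral_restrict_UNIV .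
qed

lemma emeasure_nu_s_norm_ge:
  assumes "sphere_prob (\<sigma>::'a::euclidean_space measure)" and "s > 0" and "a > 0"
  shows "emeasure (nu_s s \<sigma>) {y. a \<le> norm y} = ennreal (a powr (- 2 * s) / (2 * s))"
proof -
  have "emeasure (nu_s s \<sigma>) {y. a \<le> norm y} = (\<integral>\<^sup>+y. indicator {y. a \<le> norm y} y \<partial>nu_s s \<sigma>)"
    by (simp add: sets_nu_s)
  also have "\<dots> = (\<integral>\<^sup>+y. indicator {a..} (norm y) \<partial>nu_s s \<sigma>)"
    by (intro nn_integral_cong) (simp split: split_indicator)
  also have "\<dots> = (\<integral>\<^sup>+r. ennreal (radial_density s r * indicator {a..} r) \<partial>lborel)"
    by (subst nn_integral_nu_s_radial[OF assms(1)]) (auto simp: radial_density_nonneg intro!: nn_integral_cong split: split_indicator)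
  also have "\<dots> = ennreal (a powr (- 2 * s) / (2 * s))"
    by (rule nn_integral_has_integral_lborel[OF _ _ has_integral_radial_density_tail[OF assms(2,3)]])
       (auto simp: radial_density_nonneg)
  finally show ?thesis .
qed

lemma emeasure_nu_s_origin:
  assumes "sphere_prob (\<sigma>::'a::euclidean_space measure)"
  shows "emeasure (nu_s s \<sigma>) {0} = 0"
proof -
  have "emeasure (nu_s s \<sigma>) {0} = (\<integral>\<^sup>+y. indicator {0} y \<partial>nu_s s \<sigma>)"
    by (simp add: sets_nu_s)
  also have "\<dots> = (\<integral>\<^sup>+y. indicator {0} (norm y) \<partial>nu_s s \<sigma>)"
    by (intro nn_integral_cong) (simp split: split_indicator)
  also have "\<dots> = 0"
    by (subst nn_integral_nu_s_radial[OF assms]) (auto simp: radial_density_def split: split_indicator)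
  finally show ?thesis .
qed

lemma sigma_finite_nu_s:
  assumes sp: "sphere_prob (\<sigma>::'a::euclidean_space measure)" and s: "s > 0"
  shows "sigma_finite_measure (nu_s s \<sigma>)"
proof
  define A where "A n = {y::'a. 1 / Suc n \<le> norm y}" for n
  have "y \<in> \<Union> (range A)" if "y \<noteq> 0" for y
  proof -
    have "norm y > 0" using that by simp
    then obtain n where "inverse (Suc n) < norm y"
      using reals_Archimedean by blast
    then show ?thesis by (auto simp: A_def field_simps intro!: exI[of _ n])
  qed
  then have "insert {0} (range A) \<subseteq> sets (nu_s s \<sigma>) \<and> \<Union> (insert {0} (range A)) = space (nu_s s \<sigma>)"
    by (auto simp: sets_nu_s nu_s_def A_def)
  moreover have "\<forall>B \<in> insert {0} (range A). emeasure (nu_s s \<sigma>) B \<noteq> \<infinity>"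
    using emeasure_nu_s_norm_ge[OF sp s] emeasure_nu_s_origin[OF sp] by (auto simp: A_def)
  ultimately show "\<exists>A. countable A \<and> A \<subseteq> sets (nu_s s \<sigma>) \<and> \<Union> A = space (nu_s s \<sigma>)
      \<and> (\<forall>a\<in>A. emeasure (nu_s s \<sigma>) a \<noteq> \<infinity>)"
    by (intro exI[of _ "insert {0} (range A)"]) auto
qed

section \<open>A lower bound for c_{k,s} uniform in \<sigma>_s\<close>

lemma one_minus_cos_le_half_square: "1 - cos (x::real) \<le> x\<^sup>2 / 2"
proof -
  have "cos x = 1 - 2 * sin (x / 2) ^ 2" using cos_double_sin[of "x / 2"] by simp
  moreover have "sin (x / 2) ^ 2 \<le> (x / 2) ^ 2"
    using abs_sin_x_le_abs_x[of "x / 2"] by (metis abs_ge_zero power2_abs power_mono)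
  ultimately show ?thesis by (simp add: power_divide)
qed

lemma one_minus_cos_power_le:
  fixes t r :: real
  assumes "\<bar>t\<bar> \<le> r"
  shows "(1 - cos t) ^ k \<le> (if r \<le> 1 then r ^ (2 * k) else 2 ^ k)"
proof (cases "r \<le> 1")
  case True
  have "t\<^sup>2 \<le> r\<^sup>2" using power_mono[OF assms abs_ge_zero, of 2] by simp
  then have "1 - cos t \<le> r\<^sup>2" using one_minus_cos_le_half_square[of t] zero_le_power2[of t] by linarith
  then have "(1 - cos t) ^ k \<le> (r\<^sup>2) ^ k" by (intro power_mono) simp_all
  then show ?thesis using True by (simp add: power_mult)
next
  case False
  have "(1 - cos t) ^ k \<le> 2 ^ k" using cos_ge_minus_one[of t] by (intro power_mono) simp_all
  then show ?thesis using False by simp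
qed

lemma nn_integral_radial_density_truncated_power_le:
  fixes s :: real and k :: nat
  assumes s: "s > 0" and k: "real k > s"
  shows "(\<integral>\<^sup>+r. ennreal (radial_density s r * (if r \<le> 1 then r ^ (2 * k) else 2 ^ k)) \<partial>lborel)
     \<le> ennreal (1 / (2 * real k - 2 * s) + 2 ^ k / (2 * s))"
proof -
  define g where "g r = (if r \<in> {0..1} then r powr (2 * real k - 1 - 2 * s) else 0)
      + 2 ^ k * (radial_density s r * indicator {1..} r)" for r
  have [measurable]: "g \<in> borel_measurable borel"
    unfolding g_def by measurable
  have "(g has_integral 1 / (2 * real k - 2 * s) + 2 ^ k / (2 * s)) UNIV"
    unfolding g_def
  proof (rule has_integral_add)
    show "((\<lambda>r. if r \<in> {0..1} then r powr (2 * real k - 1 - 2 * s) else 0) has_integral 1 / (2 * real k - 2 * s)) UNIV"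
      unfolding has_integral_restrict_UNIV using has_integral_powr_from_0[of "2 * real k - 1 - 2 * s" 1] k by simp
    show "((\<lambda>r. 2 ^ k * (radial_density s r * indicator {1..} r)) has_integral 2 ^ k / (2 * s)) UNIV"
      using has_integral_mult_right[OF has_integral_radial_density_tail[OF s, of 1], of "2 ^ k"] by simp
  qed
  then have "(\<integral>\<^sup>+r. ennreal (g r) \<partial>lborel) = ennreal (1 / (2 * real k - 2 * s) + 2 ^ k / (2 * s))"
    by (rule nn_integral_has_integral_lborel[rotated 2]) (auto simp: g_def radial_density_nonneg)

  moreover have "radial_density s r * (if r \<le> 1 then r ^ (2 * k) else 2 ^ k) \<le> g r" for r
  proof -
    consider "r \<le> 0" | "0 < r" "r \<le> 1" | "1 < r" by linarith
    then show ?thesis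
    proof cases
      case 2
      then have "r ^ (2 * k) * r powr (- 1 - 2 * s) = r powr (2 * real k - 1 - 2 * s)"
        by (simp add: powr_realpow[symmetric] powr_add[symmetric]) (simp add: algebra_simps)
      then show ?thesis using 2 by (simp add: g_def radial_density_def mult.commute)
    qed (auto simp: g_def radial_density_def)
  qed
  ultimately show ?thesis
    by (metis (no_types, lifting) ennreal_leI nn_integral_mono)
qed

lemma nn_integral_nu_s_cos_power_le:
  fixes s :: real and k :: nat
  assumes sp: "sphere_prob (\<sigma>::'a::euclidean_space measure)" and s: "s > 0" and k: "real k > s"
    and e: "norm e \<le> 1"
  shows "(\<integral>\<^sup>+y. ennreal ((1 - cos (e \<bullet> y)) ^ k) \<partial>nu_s s \<sigma>)
     \<le> ennreal (1 / (2 * real k - 2 * s) + 2 ^ k / (2 * s))"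
proof -
  let ?h = "\<lambda>r::real. if r \<le> 1 then r ^ (2 * k) else 2 ^ k"
  have "\<bar>e \<bullet> y\<bar> \<le> norm y" for y
    using Cauchy_Schwarz_ineq2[of e y] mult_right_mono[OF e norm_ge_zero, of y] by simp
  then have "(\<integral>\<^sup>+y. ennreal ((1 - cos (e \<bullet> y)) ^ k) \<partial>nu_s s \<sigma>) \<le> (\<integral>\<^sup>+y. ennreal (?h (norm y)) \<partial>nu_s s \<sigma>)"
    by (intro nn_integral_mono ennreal_leI one_minus_cos_power_le)
  also have "\<dots> = (\<integral>\<^sup>+r. ennreal (radial_density s r) * ennreal (?h r) \<partial>lborel)"
    by (rule nn_integral_nu_s_radial[OF sp]) measurable
  also have "\<dots> = (\<integral>\<^sup>+r. ennreal (radial_density s r * ?h r) \<partial>lborel)"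
    by (intro nn_integral_cong) (simp add: ennreal_mult' radial_density_nonneg)
  also have "\<dots> \<le> ennreal (1 / (2 * real k - 2 * s) + 2 ^ k / (2 * s))"
    by (rule nn_integral_radial_density_truncated_power_le[OF s k])
  finally show ?thesis .
qed

lemma AE_abs_inner_powr_le_one:
  assumes sp: "sphere_prob (\<sigma>::'a::euclidean_space measure)" and s: "s > 0" and e: "norm e \<le> 1"
  shows "AE \<theta> in \<sigma>. norm (\<bar>e \<bullet> \<theta>\<bar> powr (2 * s)) \<le> 1"
proof (rule AE_I2)
  fix \<theta> assume "\<theta> \<in> space \<sigma>"
  then have "\<bar>e \<bullet> \<theta>\<bar> \<le> 1"
    using Cauchy_Schwarz_ineq2[of e \<theta>] e by (simp add: space_sphere_prob[OF sp])
  then show "norm (\<bar>e \<bullet> \<theta>\<bar> powr (2 * s)) \<le> 1"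
    using s by (simp add: powr_le1)
qed

lemma continuous_on_M_s:
  assumes sp: "sphere_prob (\<sigma>::'a::euclidean_space measure)" and s: "s > 0"
  shows "continuous_on (sphere 0 1) (M_s s \<sigma>)"
proof (rule continuous_on_sequentiallyI)
  interpret prob_space \<sigma> using sp by (simp add: sphere_prob_def)
  fix e :: "nat \<Rightarrow> 'a" and e0
  assume e: "\<forall>n. e n \<in> sphere 0 1" and "e \<longlonglongrightarrow> e0"
  then have "(\<lambda>n. \<bar>e n \<bullet> \<theta>\<bar> powr (2 * s)) \<longlonglongrightarrow> \<bar>e0 \<bullet> \<theta>\<bar> powr (2 * s)" for \<theta>
    using s by (intro tendsto_intros) auto
  then show "(\<lambda>n. M_s s \<sigma> (e n)) \<longlonglongrightarrow> M_s s \<sigma> e0"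
    unfolding M_s_def
    using e AE_abs_inner_powr_le_one[OF sp s]
    by (intro integral_dominated_convergence[where w="\<lambda>_. 1"] borel_measurable_sphere_prob[OF sp])
       auto
qed

lemma e_s_maximizes:
  assumes sp: "sphere_prob (\<sigma>::'a::euclidean_space measure)" and s: "s > 0"
  shows "e_s s \<sigma> \<in> sphere 0 1" and "\<And>e. e \<in> sphere 0 1 \<Longrightarrow> M_s s \<sigma> e \<le> M_s s \<sigma> (e_s s \<sigma>)"
proof -
  obtain b :: 'a where "b \<in> Basis" using nonempty_Basis by blast
  then have "sphere (0::'a) 1 \<noteq> {}" by auto
  then have "\<exists>e. e \<in> sphere 0 1 \<and> (\<forall>e'\<in>sphere 0 1. M_s s \<sigma> e' \<le> M_s s \<sigma> e)"
    using continuous_attains_sup[OF compact_sphere _ continuous_on_M_s[OF sp s]] by blast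
  then have "e_s s \<sigma> \<in> sphere 0 1 \<and> (\<forall>e'\<in>sphere 0 1. M_s s \<sigma> e' \<le> M_s s \<sigma> (e_s s \<sigma>))"
    unfolding e_s_def by (rule someI_ex)
  then show "e_s s \<sigma> \<in> sphere 0 1" and "\<And>e. e \<in> sphere 0 1 \<Longrightarrow> M_s s \<sigma> e \<le> M_s s \<sigma> (e_s s \<sigma>)"
    by auto
qed

lemma not_AE_e_s_orthogonal:
  assumes sp: "sphere_prob (\<sigma>::'a::euclidean_space measure)" and s: "s > 0"
  shows "\<not> (AE \<theta> in \<sigma>. e_s s \<sigma> \<bullet> \<theta> = 0)"
proof
  interpret prob_space \<sigma> using sp by (simp add: sphere_prob_def)
  assume "AE \<theta> in \<sigma>. e_s s \<sigma> \<bullet> \<theta> = 0"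
  then have "M_s s \<sigma> (e_s s \<sigma>) = 0"
    unfolding M_s_def using s
    by (subst integral_cong_AE[where g="\<lambda>_. 0"]) (auto intro!: borel_measurable_sphere_prob[OF sp])
  have "AE \<theta> in \<sigma>. \<bar>b \<bullet> \<theta>\<bar> powr (2 * s) = 0" if b: "b \<in> Basis" for b
  proof -
    have integrable: "integrable \<sigma> (\<lambda>\<theta>. \<bar>b \<bullet> \<theta>\<bar> powr (2 * s))"
      using b AE_abs_inner_powr_le_one[OF sp s, of b]
      by (intro integrable_const_bound[where B=1] borel_measurable_sphere_prob[OF sp]) auto
    have "M_s s \<sigma> b \<le> 0"
      using e_s_maximizes(2)[OF sp s, of b] b \<open>M_s s \<sigma> (e_s s \<sigma>) = 0\<close> by simp
    moreover have "M_s s \<sigma> b \<ge> 0" unfolding M_s_def by simp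
    ultimately show ?thesis
      using integral_nonneg_eq_0_iff_AE[OF integrable] unfolding M_s_def by simp
  qed
  then have "AE \<theta> in \<sigma>. \<forall>b\<in>Basis. \<bar>b \<bullet> \<theta>\<bar> powr (2 * s) = 0"
    by (subst AE_finite_all) auto
  then have "AE \<theta> in \<sigma>. \<theta> = 0"
    by eventually_elim (metis euclidean_all_zero_iff inner_commute abs_eq_0 powr_eq_0_iff)
  moreover have "AE \<theta> in \<sigma>. \<theta> \<noteq> 0"
    by (rule AE_I2) (auto simp: space_sphere_prob[OF sp])
  ultimately have "AE \<theta> in \<sigma>. False" by eventually_elim simp
  then show False by (simp add: AE_False)
qed

lemma nn_integral_radial_density_cos_power_pos:
  fixes t :: real
  assumes "t \<noteq> 0"
  shows "(\<integral>\<^sup>+r. ennreal (radial_density s r * (1 - cos (r * t)) ^ k) \<partial>lborel) \<noteq> 0"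
proof
  define a b where "a = pi / (2 * \<bar>t\<bar>)" and "b = pi / \<bar>t\<bar>"
  have ab: "0 < a" "a < b" using assms unfolding a_def b_def by (auto simp: field_simps)
  assume "(\<integral>\<^sup>+r. ennreal (radial_density s r * (1 - cos (r * t)) ^ k) \<partial>lborel) = 0"
  then have "AE r in lborel. radial_density s r * (1 - cos (r * t)) ^ k = 0"
    by (subst (asm) nn_integral_0_iff_AE) (auto simp: radial_density_nonneg)
  then have "AE r in lborel. r \<notin> {a..b}"
  proof eventually_elim
    case (elim r)
    show "r \<notin> {a..b}"
    proof
      assume r: "r \<in> {a..b}"
      \<comment> \<open>on \<open>[a, b]\<close> the phase \<open>r |t|\<close> lies in \<open>[\<pi>/2, \<pi>]\<close>, where the cosine is nonpositive\<close>
      have "r > 0" using r ab by simp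
      then have "pi / 2 \<le> \<bar>r * t\<bar>" "\<bar>r * t\<bar> \<le> pi"
        using r assms unfolding a_def b_def by (auto simp: abs_mult field_simps)
      then have "cos (r * t) \<le> 0"
        using cos_monotone_0_pi_le[of "pi / 2" "\<bar>r * t\<bar>"] by simp
      moreover have "radial_density s r > 0" using \<open>r > 0\<close> by (simp add: radial_density_def)
      ultimately show False using elim by simp
    qed
  qed
  then have "emeasure lborel {a..b} = 0"
    by (subst AE_iff_measurable[symmetric]) auto
  then show False using ab by simp
qed

lemma nn_integral_nu_s_cos_power_e_s_pos:
  assumes sp: "sphere_prob (\<sigma>::'a::euclidean_space measure)" and s: "s > 0"
  shows "(\<integral>\<^sup>+y. ennreal ((1 - cos (e_s s \<sigma> \<bullet> y)) ^ k) \<partial>nu_s s \<sigma>) \<noteq> 0"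
proof
  interpret prob_space \<sigma> using sp by (simp add: sphere_prob_def)
  interpret pair_sigma_finite lborel \<sigma>
    by unfold_locales
  note [measurable] = borel_measurable_sphere_prob[OF sp measurable_ident_sets[OF refl]]
  define H where "H r \<theta> = ennreal (radial_density s r * (1 - cos (r * (e_s s \<sigma> \<bullet> \<theta>))) ^ k)" for r \<theta>
  have [measurable]: "case_prod H \<in> borel_measurable (lborel \<Otimes>\<^sub>M \<sigma>)"
    unfolding H_def by measurable
  assume "(\<integral>\<^sup>+y. ennreal ((1 - cos (e_s s \<sigma> \<bullet> y)) ^ k) \<partial>nu_s s \<sigma>) = 0"
  moreover have "(\<integral>\<^sup>+y. ennreal ((1 - cos (e_s s \<sigma> \<bullet> y)) ^ k) \<partial>nu_s s \<sigma>) = (\<integral>\<^sup>+r. \<integral>\<^sup>+\<theta>. H r \<theta> \<partial>\<sigma> \<partial>lborel)"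
  proof (subst nn_integral_nu_s[OF sp], measurable, intro nn_integral_cong)
    fix r :: real
    show "ennreal (radial_density s r) * (\<integral>\<^sup>+\<theta>. ennreal ((1 - cos (e_s s \<sigma> \<bullet> r *\<^sub>R \<theta>)) ^ k) \<partial>\<sigma>)
        = (\<integral>\<^sup>+\<theta>. H r \<theta> \<partial>\<sigma>)"
      unfolding H_def
      by (subst nn_integral_cmult[symmetric]) (auto simp: ennreal_mult' radial_density_nonneg)
  qed
  moreover have "\<dots> = (\<integral>\<^sup>+\<theta>. \<integral>\<^sup>+r. H r \<theta> \<partial>lborel \<partial>\<sigma>)"
    by (rule Fubini'[symmetric]) measurable
  ultimately have "AE \<theta> in \<sigma>. (\<integral>\<^sup>+r. H r \<theta> \<partial>lborel) = 0"
    by (subst nn_integral_0_iff_AE[symmetric]) (simp_all, measurable)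
  then have "AE \<theta> in \<sigma>. e_s s \<sigma> \<bullet> \<theta> = 0"
    unfolding H_def by (auto elim!: eventually_mono dest: nn_integral_radial_density_cos_power_pos)
  then show False using not_AE_e_s_orthogonal[OF sp s] by simp
qed

definition c_ks_lower :: "nat \<Rightarrow> real \<Rightarrow> real" where
  "c_ks_lower k s = 2 / (2 ^ k * (1 / (2 * real k - 2 * s) + 2 ^ k / (2 * s)))"

lemma c_ks_lower_pos: "s > 0 \<Longrightarrow> real k > s \<Longrightarrow> c_ks_lower k s > 0"
  unfolding c_ks_lower_def by (intro divide_pos_pos mult_pos_pos add_pos_pos) auto

lemma c_ks_lower_le:
  assumes sp: "sphere_prob (\<sigma>::'a::euclidean_space measure)" and s: "s > 0" and k: "real k > s"
  shows "c_ks_lower k s \<le> c_ks k s \<sigma>"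
proof -
  define I where "I = (\<integral>\<^sup>+y. ennreal ((1 - cos (e_s s \<sigma> \<bullet> y)) ^ k) \<partial>nu_s s \<sigma>)"
  have "norm (e_s s \<sigma>) \<le> 1" using e_s_maximizes(1)[OF sp s] by simp
  then have le: "I \<le> ennreal (1 / (2 * real k - 2 * s) + 2 ^ k / (2 * s))"
    unfolding I_def by (rule nn_integral_nu_s_cos_power_le[OF sp s k])
  then obtain x where x: "I = ennreal x" "0 \<le> x"
    by (metis ennreal_cases ennreal_neq_top neq_top_trans)
  have "I \<noteq> 0" unfolding I_def by (rule nn_integral_nu_s_cos_power_e_s_pos[OF sp s])
  then have "0 < enn2real I" "enn2real I \<le> 1 / (2 * real k - 2 * s) + 2 ^ k / (2 * s)"
    using le x k s ennreal_le_iff[of "1 / (2 * real k - 2 * s) + 2 ^ k / (2 * s)" x]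
    by (auto simp del: ennreal_plus)
  then show ?thesis
    unfolding c_ks_lower_def c_ks_def I_def[symmetric]
    by (intro divide_left_mono mult_left_mono mult_pos_pos) auto
qed

section \<open>Finite differences with long steps\<close>

lemma AE_lborel_translate:
  fixes c :: "'a::euclidean_space"
  assumes "AE x in lborel. P x"
  shows "AE x in lborel. P (c + x)"
proof -
  have "AE x in distr lborel borel ((+) c). P x"
    using assms by (subst lborel_distr_plus)
  then show ?thesis by (rule AE_distrD[rotated]) simp
qed

lemma borel_measurable_delta_m [measurable]:
  assumes [measurable]: "u \<in> borel_measurable borel"
  shows "(\<lambda>z. delta_m m u (fst z) (snd z)) \<in> borel_measurable (lborel \<Otimes>\<^sub>M nu_s s \<sigma>)"
proof -
  have "sets (lborel \<Otimes>\<^sub>M nu_s s \<sigma>) = sets (borel \<Otimes>\<^sub>M (borel :: 'a measure))"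
    by (intro sets_pair_measure_cong) (simp_all add: sets_nu_s)
  moreover have "(\<lambda>z. delta_m m u (fst z) (snd z)) \<in> borel_measurable (borel \<Otimes>\<^sub>M (borel :: 'a measure))"
    unfolding delta_m_def by measurable
  ultimately show ?thesis using measurable_cong_sets by blast
qed

lemma delta_m_eq_central:
  assumes "\<And>j. j \<in> {-int m..int m} \<Longrightarrow> j \<noteq> 0 \<Longrightarrow> u (x + of_int j *\<^sub>R y) = 0"
  shows "delta_m m u x y = real ((2 * m) choose m) * u x"
proof -
  have "delta_m m u x y = (\<Sum>j\<in>{0::int}. (-1) ^ nat \<bar>j\<bar> * real ((2 * m) choose nat (int m - j)) * u (x + of_int j *\<^sub>R y))"
    unfolding delta_m_def by (rule sum.mono_neutral_right) (auto simp: assms)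
  then show ?thesis by simp
qed

lemma delta_m_eq_central_if_far:
  assumes "bounded \<Omega>" and "x \<in> \<Omega>" and "diameter \<Omega> < norm y"
    and "\<And>j. j \<in> {-int m..int m} \<Longrightarrow> x + of_int j *\<^sub>R y \<notin> \<Omega> \<Longrightarrow> u (x + of_int j *\<^sub>R y) = 0"
  shows "delta_m m u x y = real ((2 * m) choose m) * u x"
proof (rule delta_m_eq_central)
  fix j :: int assume j: "j \<in> {-int m..int m}" "j \<noteq> 0"
  have "1 \<le> \<bar>real_of_int j\<bar>" using j(2) by linarith
  then have "norm y \<le> \<bar>of_int j\<bar> * norm y"
    using mult_right_mono[of 1 "\<bar>real_of_int j\<bar>" "norm y"] by simp
  then have "diameter \<Omega> < dist x (x + of_int j *\<^sub>R y)"
    using assms(3) by (simp add: dist_norm)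
  then have "x + of_int j *\<^sub>R y \<notin> \<Omega>"
    using diameter_bounded_bound[OF assms(1,2)] by force
  then show "u (x + of_int j *\<^sub>R y) = 0" using assms(4) j(1) by blast
qed

lemma nn_integral_delta_m_ge_if_far:
  fixes u :: "'a::euclidean_space \<Rightarrow> real"
  assumes [measurable]: "u \<in> borel_measurable borel"
    and zero: "AE x in lborel. x \<notin> \<Omega> \<longrightarrow> u x = 0"
    and "bounded \<Omega>" and "diameter \<Omega> < norm y"
  shows "ennreal ((real ((2 * m) choose m))\<^sup>2) * (\<integral>\<^sup>+x. ennreal ((u x)\<^sup>2) \<partial>lborel)
     \<le> (\<integral>\<^sup>+x. ennreal ((delta_m m u x y)\<^sup>2) \<partial>lborel)"
proof -
  define B where "B = real ((2 * m) choose m)"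
  have "AE x in lborel. x + c \<notin> \<Omega> \<longrightarrow> u (x + c) = 0" for c :: 'a
    using AE_lborel_translate[OF zero, of c] by (simp add: add.commute)
  then have "AE x in lborel. \<forall>j\<in>{-int m..int m}. x + of_int j *\<^sub>R y \<notin> \<Omega> \<longrightarrow> u (x + of_int j *\<^sub>R y) = 0"
    by (subst AE_finite_all) auto
  then have "AE x in lborel. ennreal ((B * u x)\<^sup>2) \<le> ennreal ((delta_m m u x y)\<^sup>2)"
    using zero
  proof eventually_elim
    case (elim x)
    then show ?case
      using delta_m_eq_central_if_far[OF assms(3) _ assms(4), of x m u] by (cases "x \<in> \<Omega>") (auto simp: B_def)
  qed
  then have "(\<integral>\<^sup>+x. ennreal ((B * u x)\<^sup>2) \<partial>lborel) \<le> (\<integral>\<^sup>+x. ennreal ((delta_m m u x y)\<^sup>2) \<partial>lborel)"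
    by (rule nn_integral_mono_AE)
  moreover have "(\<integral>\<^sup>+x. ennreal ((B * u x)\<^sup>2) \<partial>lborel) = ennreal (B\<^sup>2) * (\<integral>\<^sup>+x. ennreal ((u x)\<^sup>2) \<partial>lborel)"
    by (subst nn_integral_cmult[symmetric]) (auto simp: ennreal_mult power_mult_distrib)
  ultimately show ?thesis unfolding B_def by simp
qed

lemma nn_integral_delta_m_ge:
  fixes u :: "'a::euclidean_space \<Rightarrow> real"
  assumes sp: "sphere_prob (\<sigma>::'a measure)" and s: "s > 0"
    and [measurable]: "u \<in> borel_measurable borel"
    and zero: "AE x in lborel. x \<notin> \<Omega> \<longrightarrow> u x = 0"
    and bounded: "bounded \<Omega>" and a: "diameter \<Omega> < a" "0 < a"
  shows "ennreal ((real ((2 * m) choose m))\<^sup>2) * (\<integral>\<^sup>+x. ennreal ((u x)\<^sup>2) \<partial>lborel) * ennreal (a powr (- 2 * s) / (2 * s))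
     \<le> (\<integral>\<^sup>+z. ennreal ((delta_m m u (fst z) (snd z))\<^sup>2) \<partial>(lborel \<Otimes>\<^sub>M nu_s s \<sigma>))"
proof -
  interpret nu: sigma_finite_measure "nu_s s \<sigma>" by (rule sigma_finite_nu_s[OF sp s])
  interpret pair_sigma_finite lborel "nu_s s \<sigma>" ..
  define A where "A = ennreal ((real ((2 * m) choose m))\<^sup>2) * (\<integral>\<^sup>+x. ennreal ((u x)\<^sup>2) \<partial>lborel)"
  have "A * ennreal (a powr (- 2 * s) / (2 * s)) = (\<integral>\<^sup>+y. A * indicator {y. a \<le> norm y} y \<partial>nu_s s \<sigma>)"
    by (subst nn_integral_cmult_indicator) (simp_all add: sets_nu_s emeasure_nu_s_norm_ge[OF sp s a(2)])
  also have "\<dots> \<le> (\<integral>\<^sup>+y. \<integral>\<^sup>+x. ennreal ((delta_m m u x y)\<^sup>2) \<partial>lborel \<partial>nu_s s \<sigma>)"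
    using nn_integral_delta_m_ge_if_far[OF _ zero bounded] a(1)
    by (intro nn_integral_mono) (auto simp: A_def split: split_indicator)
  also have "\<dots> = (\<integral>\<^sup>+z. ennreal ((delta_m m u (fst z) (snd z))\<^sup>2) \<partial>(lborel \<Otimes>\<^sub>M nu_s s \<sigma>))"
    by (subst nn_integral_snd[symmetric]) simp_all
  finally show ?thesis unfolding A_def .
qed

section \<open>The Poincare inequality\<close>

lemma E_form_diag_eq_E_energy:
  assumes [measurable]: "u \<in> borel_measurable borel"
  shows "E_form s \<sigma> u u = enn2real (E_energy s \<sigma> u)"
proof -
  have "(\<integral>z. delta_m (s1 s) u (fst z) (snd z) * delta_m (s1 s) u (fst z) (snd z) \<partial>(lborel \<Otimes>\<^sub>M nu_s s \<sigma>))
      = enn2real (\<integral>\<^sup>+z. ennreal ((delta_m (s1 s) u (fst z) (snd z))\<^sup>2) \<partial>(lborel \<Otimes>\<^sub>M nu_s s \<sigma>))"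
    by (subst integral_eq_nn_integral) (simp_all add: power2_eq_square)
  then show ?thesis
    unfolding E_form_def E_energy_def by (simp add: enn2real_mult c_ks_def)
qed

definition poincare_constant :: "real \<Rightarrow> real \<Rightarrow> real" where
  "poincare_constant s a =
     2 / (c_ks_lower (2 * s1 s) s * (real ((2 * s1 s) choose s1 s))\<^sup>2 * (a powr (- 2 * s) / (2 * s)))"

lemma poincare_constant_pos: "s > 0 \<Longrightarrow> a > 0 \<Longrightarrow> poincare_constant s a > 0"
  unfolding poincare_constant_def
  by (intro divide_pos_pos mult_pos_pos c_ks_lower_pos) (simp_all add: s1_def, linarith)

lemma nn_integral_square_le_E_energy:
  fixes u :: "'a::euclidean_space \<Rightarrow> real"
  assumes sp: "sphere_prob (\<sigma>::'a measure)" and s: "s > 0"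
    and [measurable]: "u \<in> borel_measurable borel"
    and zero: "AE x in lborel. x \<notin> \<Omega> \<longrightarrow> u x = 0"
    and bounded: "bounded \<Omega>" and a: "diameter \<Omega> < a" "0 < a"
  shows "(\<integral>\<^sup>+x. ennreal ((u x)\<^sup>2) \<partial>lborel) \<le> ennreal (poincare_constant s a) * E_energy s \<sigma> u"
proof -
  define k where "k = 2 * s1 s"
  define B where "B = (real ((2 * s1 s) choose s1 s))\<^sup>2"
  define t where "t = a powr (- 2 * s) / (2 * s)"
  define U where "U = (\<integral>\<^sup>+x. ennreal ((u x)\<^sup>2) \<partial>lborel)"
  define Q where "Q = (\<integral>\<^sup>+z. ennreal ((delta_m (s1 s) u (fst z) (snd z))\<^sup>2) \<partial>(lborel \<Otimes>\<^sub>M nu_s s \<sigma>))"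
  have k: "real k > s" unfolding k_def s1_def using s by linarith
  have lower: "c_ks_lower k s \<le> c_ks k s \<sigma>" by (rule c_ks_lower_le[OF sp s k])
  have pos: "c_ks_lower k s > 0" "B > 0" "t > 0"
    using c_ks_lower_pos[OF s k] s a unfolding B_def t_def by simp_all
  have "poincare_constant s a * (c_ks_lower k s / 2 * B * t) = 1"
    using pos s a unfolding poincare_constant_def k_def B_def t_def by (simp add: field_simps)
  then have "U = ennreal (poincare_constant s a * (c_ks_lower k s / 2 * B * t)) * U"
    by simp
  also have "\<dots> = ennreal (poincare_constant s a) * (ennreal (c_ks_lower k s / 2) * (ennreal B * U * ennreal t))"
    using pos poincare_constant_pos[OF s a(2)] by (simp add: ennreal_mult[symmetric] mult_ac)
  also have "\<dots> \<le> ennreal (poincare_constant s a) * (ennreal (c_ks k s \<sigma> / 2) * Q)"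
    unfolding B_def U_def Q_def t_def
    by (intro mult_left_mono mult_mono ennreal_leI nn_integral_delta_m_ge[OF sp s _ zero bounded a])
       (simp_all add: lower)
  finally show ?thesis unfolding U_def Q_def k_def E_energy_def .
qed

lemma X_s_AE_zero_outside:
  assumes "u \<in> X_s s \<sigma> \<Omega>" and "open \<Omega>"
  shows "AE x in lborel. x \<notin> \<Omega> \<longrightarrow> u x = 0"
proof -
  from assms(1) obtain \<phi> where [measurable]: "u \<in> borel_measurable lborel"
    and test: "\<And>n. test_fun \<Omega> (\<phi> n)" and lim: "(\<lambda>n. X_normsq s \<sigma> (\<lambda>x. u x - \<phi> n x)) \<longlonglongrightarrow> 0"
    unfolding X_s_def by blast
  have [measurable]: "\<Omega> \<in> sets borel" using assms(2) by auto
  have vanish: "\<phi> n x = 0" if "x \<notin> \<Omega>" for n x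
    using test[of n] closure_subset[of "{x. \<phi> n x \<noteq> 0}"] that unfolding test_fun_def by blast
  have "(\<integral>\<^sup>+x. indicator (- \<Omega>) x * ennreal ((u x)\<^sup>2) \<partial>lborel) \<le> X_normsq s \<sigma> (\<lambda>x. u x - \<phi> n x)" for n
  proof -
    have "(\<integral>\<^sup>+x. indicator (- \<Omega>) x * ennreal ((u x)\<^sup>2) \<partial>lborel) \<le> (\<integral>\<^sup>+x. ennreal ((u x - \<phi> n x)\<^sup>2) \<partial>lborel)"
      by (intro nn_integral_mono) (auto simp: vanish split: split_indicator)
    then show ?thesis unfolding X_normsq_def by (simp add: add_increasing2)
  qed
  then have "(\<integral>\<^sup>+x. indicator (- \<Omega>) x * ennreal ((u x)\<^sup>2) \<partial>lborel) = 0"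
    using LIMSEQ_le_const[OF lim] by (metis le_zero_eq)
  then have "AE x in lborel. indicator (- \<Omega>) x * ennreal ((u x)\<^sup>2) = 0"
    by (subst (asm) nn_integral_0_iff_AE) simp_all
  then show ?thesis by eventually_elim (auto split: split_indicator)
qed

lemma X_s_L2_le_E_form:
  fixes u :: "'a::euclidean_space \<Rightarrow> real"
  assumes u: "u \<in> X_s s \<sigma> \<Omega>" and sp: "sphere_prob \<sigma>" and s: "s > 0"
    and "open \<Omega>" and "bounded \<Omega>" and a: "diameter \<Omega> < a" "0 < a"
  shows "(\<integral>x. (u x)\<^sup>2 \<partial>lborel) \<le> poincare_constant s a * E_form s \<sigma> u u"
proof -
  from u have [measurable]: "u \<in> borel_measurable borel" and finite: "E_energy s \<sigma> u < \<top>"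
    by (auto simp: X_s_def X_normsq_def)
  have "(\<integral>\<^sup>+x. ennreal ((u x)\<^sup>2) \<partial>lborel) \<le> ennreal (poincare_constant s a) * E_energy s \<sigma> u"
    using nn_integral_square_le_E_energy[OF sp s _ X_s_AE_zero_outside[OF u \<open>open \<Omega>\<close>] \<open>bounded \<Omega>\<close> a]
    by simp
  then have "enn2real (\<integral>\<^sup>+x. ennreal ((u x)\<^sup>2) \<partial>lborel) \<le> enn2real (ennreal (poincare_constant s a) * E_energy s \<sigma> u)"
    using finite by (intro enn2real_mono) (simp_all add: ennreal_mult_less_top)
  moreover have "(\<integral>x. (u x)\<^sup>2 \<partial>lborel) = enn2real (\<integral>\<^sup>+x. ennreal ((u x)\<^sup>2) \<partial>lborel)"
    by (rule integral_eq_nn_integral) simp_all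
  ultimately show ?thesis
    using poincare_constant_pos[OF s a(2)] by (simp add: E_form_diag_eq_E_energy enn2real_mult)
qed

lemma X_s_integrable_square:
  assumes "u \<in> X_s s \<sigma> \<Omega>"
  shows "integrable lborel (\<lambda>x. (u x)\<^sup>2)"
  using assms by (intro integrableI_nonneg) (auto simp: X_s_def X_normsq_def less_top)

theorem proposition4p9:
  fixes s :: real and d :: real
  assumes "s > 0"
  shows "\<exists>C>0. \<forall>(\<sigma>::'a::euclidean_space measure) (\<Omega>::'a set).
            sphere_prob \<sigma> \<and> open \<Omega> \<and> bounded \<Omega> \<and> diameter \<Omega> = d \<longrightarrow>
            (\<forall>u\<in>X_s s \<sigma> \<Omega>.
               (\<integral>x. (u x)\<^sup>2 \<partial>lborel) \<le> C * E_form s \<sigma> u u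
             \<and> E_form s \<sigma> u u \<le> (\<integral>x. (u x)\<^sup>2 \<partial>lborel) + E_form s \<sigma> u u
             \<and> (\<integral>x. (u x)\<^sup>2 \<partial>lborel) + E_form s \<sigma> u u \<le> (1 + C) * E_form s \<sigma> u u
             \<and> (E_form s \<sigma> u u = 0 \<longrightarrow> (AE x in lborel. u x = 0)))"
proof (intro exI[of _ "poincare_constant s (max d 0 + 1)"] conjI allI impI ballI)
  let ?C = "poincare_constant s (max d 0 + 1)"
  show "?C > 0" using poincare_constant_pos[OF assms] by simp
  fix \<sigma> :: "'a measure" and \<Omega> u
  assume "sphere_prob \<sigma> \<and> open \<Omega> \<and> bounded \<Omega> \<and> diameter \<Omega> = d" and u: "u \<in> X_s s \<sigma> \<Omega>"
  then show poincare: "(\<integral>x. (u x)\<^sup>2 \<partial>lborel) \<le> ?C * E_form s \<sigma> u u"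
    using X_s_L2_le_E_form[OF u _ assms] by simp
  have nonneg: "(\<integral>x. (u x)\<^sup>2 \<partial>lborel) \<ge> 0" "E_form s \<sigma> u u \<ge> 0"
    using u by (simp_all add: E_form_diag_eq_E_energy X_s_def)
  then show "E_form s \<sigma> u u \<le> (\<integral>x. (u x)\<^sup>2 \<partial>lborel) + E_form s \<sigma> u u"
    and "(\<integral>x. (u x)\<^sup>2 \<partial>lborel) + E_form s \<sigma> u u \<le> (1 + ?C) * E_form s \<sigma> u u"
    using poincare by (simp_all add: distrib_right)
  assume "E_form s \<sigma> u u = 0"
  then have "(\<integral>x. (u x)\<^sup>2 \<partial>lborel) = 0" using poincare nonneg(1) by simp
  then show "AE x in lborel. u x = 0"
    using integral_nonneg_eq_0_iff_AE[OF X_s_integrable_square[OF u]] by simp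
qed

end
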